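(* Let $X\subset\mathbb{R}^n$, let $F(\cdot,\xi)$ be a real-valued random function with $f(x)=\mathbb{E}[F(x,\xi)]$ finite, and let $c\in(0,1]$. For $x\in X$, $y\in\mathbb{R}$, $z>0$ define \[ \phi(x,y,z)=\frac cz\mathbb{E}[(F(x,\xi)-y)_+^2]+y+\frac c4z,\qquad \Phi(x,y)=y+c\,\mathbb{E}^{1/2}[(F(x,\xi)-y)_+^2], \] and $h(x)=f(x)+c\,\mathbb{E}^{1/2}[(F(x,\xi)-f(x))_+^2]$. Then for any $x\in X$ and $y\in\mathbb{R}$, $\inf_{z>0}\phi(x,y,z)=\Phi(x,y)$ is attained at $z=2\mathbb{E}^{1/2}[(F(x,\xi)-y)_+^2]$. Moreover, for any $x\in X$, \[ \inf_{y\ge f(x),z>0}\phi(x,y,z)=\inf_{y\ge f(x)}\Phi(x,y)=h(x), \] attained at $y=f(x)$ and $z=2\mathbb{E}^{1/2}[(F(x,\xi)-f(x))_+^2]$.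
   Context: $(a)_+=\max\{a,0\}$; $F(x,\xi)$ is assumed to have finite second moment for each $x$. *)

theory Defs
  imports "HOL-Probability.Probability"
begin

definition pos_part :: "real \<Rightarrow> real" where
  "pos_part a = max a 0"

definition mean_f :: "'a measure \<Rightarrow> ('x \<Rightarrow> 'a \<Rightarrow> real) \<Rightarrow> 'x \<Rightarrow> real" where
  "mean_f M F x = (\<integral>\<xi>. F x \<xi> \<partial>M)"

definition upsq :: "'a measure \<Rightarrow> ('x \<Rightarrow> 'a \<Rightarrow> real) \<Rightarrow> 'x \<Rightarrow> real \<Rightarrow> real" where
  "upsq M F x y = (\<integral>\<xi>. (pos_part (F x \<xi> - y))\<^sup>2 \<partial>M)"

definition phi_fun :: "'a measure \<Rightarrow> ('x \<Rightarrow> 'a \<Rightarrow> real) \<Rightarrow> real \<Rightarrow> 'x \<Rightarrow> real \<Rightarrow> real \<Rightarrow> real" where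
  "phi_fun M F c x y z = c / z * upsq M F x y + y + c / 4 * z"

definition Phi_fun :: "'a measure \<Rightarrow> ('x \<Rightarrow> 'a \<Rightarrow> real) \<Rightarrow> real \<Rightarrow> 'x \<Rightarrow> real \<Rightarrow> real" where
  "Phi_fun M F c x y = y + c * sqrt (upsq M F x y)"

definition h_fun :: "'a measure \<Rightarrow> ('x \<Rightarrow> 'a \<Rightarrow> real) \<Rightarrow> real \<Rightarrow> 'x \<Rightarrow> real" where
  "h_fun M F c x = mean_f M F x + c * sqrt (upsq M F x (mean_f M F x))"

end

theory Submission
  imports Defs
begin

text \<open>For fixed \<open>y\<close>, \<open>\<phi>\<close> is \<open>y + c (U/z + z/4)\<close> with \<open>U = E[(F - y)\<^sub>+\<^sup>2]\<close>, and AM-GM gives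
  \<open>U/z + z/4 \<ge> \<surd>U\<close> with equality at \<open>z = 2\<surd>U\<close>; this is the first claim. For the second, the
  map \<open>y \<mapsto> \<surd>E[(F - y)\<^sub>+\<^sup>2]\<close> is 1-Lipschitz (pointwise \<open>(F - f)\<^sub>+ \<le> (F - y)\<^sub>+ + (y - f)\<close> and the
  triangle inequality in \<open>L\<^sup>2\<close>), so \<open>c \<le> 1\<close> makes \<open>\<Phi>(x, \<cdot>)\<close> nondecreasing and its infimum over
  \<open>y \<ge> f(x)\<close> is attained at \<open>y = f(x)\<close>, where \<open>\<Phi>(x, f(x)) = h(x)\<close>.\<close>

lemma (in prob_space) square_integral_le_integral_square:
  fixes g :: "'a \<Rightarrow> real"
  assumes "g \<in> borel_measurable M" and "integrable M (\<lambda>\<omega>. (g \<omega>)\<^sup>2)"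
  shows "(\<integral>\<omega>. g \<omega> \<partial>M)\<^sup>2 \<le> (\<integral>\<omega>. (g \<omega>)\<^sup>2 \<partial>M)"
proof -
  have "integrable M g" using assms by (rule square_integrable_imp_integrable)
  with assms variance_positive[of g] show ?thesis by (simp add: variance_eq)
qed

lemma (in prob_space) sqrt_integral_square_add_le:
  fixes g :: "'a \<Rightarrow> real"
  assumes meas: "g \<in> borel_measurable M" and sq: "integrable M (\<lambda>\<omega>. (g \<omega>)\<^sup>2)" and "0 \<le> d"
  shows "sqrt (\<integral>\<omega>. (g \<omega> + d)\<^sup>2 \<partial>M) \<le> sqrt (\<integral>\<omega>. (g \<omega>)\<^sup>2 \<partial>M) + d"
proof -
  let ?N = "sqrt (\<integral>\<omega>. (g \<omega>)\<^sup>2 \<partial>M)"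
  have int: "integrable M g" using meas sq by (rule square_integrable_imp_integrable)
  have "(\<integral>\<omega>. g \<omega> \<partial>M) \<le> ?N"
    using square_integral_le_integral_square[OF meas sq] by (rule real_le_rsqrt)
  then have "(\<integral>\<omega>. (g \<omega>)\<^sup>2 \<partial>M) + 2 * d * (\<integral>\<omega>. g \<omega> \<partial>M) + d\<^sup>2 \<le> ?N\<^sup>2 + 2 * d * ?N + d\<^sup>2"
    using \<open>0 \<le> d\<close> integral_nonneg_AE[of "\<lambda>\<omega>. (g \<omega>)\<^sup>2" M] by (simp add: mult_left_mono)
  also have "\<dots> = (?N + d)\<^sup>2" by (simp add: power2_sum)
  finally have "(\<integral>\<omega>. (g \<omega> + d)\<^sup>2 \<partial>M) \<le> (?N + d)\<^sup>2"
    using int sq by (simp add: power2_sum prob_space mult_ac)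
  then show ?thesis using \<open>0 \<le> d\<close> by (simp add: real_le_lsqrt)
qed

lemma upsq_nonneg: "0 \<le> upsq M F x y"
  unfolding upsq_def by (rule integral_nonneg_AE) simp

lemma (in prob_space) integrable_pos_part_diff_square:
  fixes X :: "'a \<Rightarrow> real"
  assumes meas: "X \<in> borel_measurable M" and sq: "integrable M (\<lambda>\<omega>. (X \<omega>)\<^sup>2)"
  shows "integrable M (\<lambda>\<omega>. (pos_part (X \<omega> - y))\<^sup>2)"
proof (rule Bochner_Integration.integrable_bound)
  have "integrable M X" using meas sq by (rule square_integrable_imp_integrable)
  then show "integrable M (\<lambda>\<omega>. (X \<omega> - y)\<^sup>2)"
    using sq by (simp add: power2_diff)
  show "(\<lambda>\<omega>. (pos_part (X \<omega> - y))\<^sup>2) \<in> borel_measurable M"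
    unfolding pos_part_def using meas by measurable
  show "AE \<omega> in M. norm ((pos_part (X \<omega> - y))\<^sup>2) \<le> norm ((X \<omega> - y)\<^sup>2)"
    by (simp add: pos_part_def max_def)
qed

lemma sqrt_upsq_le:
  assumes "prob_space M" and meas: "F x \<in> borel_measurable M"
    and sq: "integrable M (\<lambda>\<xi>. (F x \<xi>)\<^sup>2)" and "f \<le> y"
  shows "sqrt (upsq M F x f) \<le> sqrt (upsq M F x y) + (y - f)"
proof -
  interpret prob_space M by fact
  let ?g = "\<lambda>\<xi>. pos_part (F x \<xi> - y)"
  have g_meas: "?g \<in> borel_measurable M"
    unfolding pos_part_def using meas by measurable
  have g_sq: "integrable M (\<lambda>\<xi>. (?g \<xi>)\<^sup>2)"
    using meas sq by (rule integrable_pos_part_diff_square)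
  have "integrable M (\<lambda>\<xi>. (?g \<xi> + (y - f))\<^sup>2)"
    using square_integrable_imp_integrable[OF g_meas g_sq] g_sq by (simp add: power2_sum)
  then have "upsq M F x f \<le> (\<integral>\<xi>. (?g \<xi> + (y - f))\<^sup>2 \<partial>M)"
    unfolding upsq_def using integrable_pos_part_diff_square[OF meas sq] \<open>f \<le> y\<close>
    by (intro integral_mono power_mono) (auto simp: pos_part_def)
  then have "sqrt (upsq M F x f) \<le> sqrt (\<integral>\<xi>. (?g \<xi> + (y - f))\<^sup>2 \<partial>M)"
    by (rule real_sqrt_le_mono)
  also have "\<dots> \<le> sqrt (upsq M F x y) + (y - f)"
    unfolding upsq_def using g_meas g_sq \<open>f \<le> y\<close> by (intro sqrt_integral_square_add_le) auto
  finally show ?thesis .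
qed

lemma sqrt_le_div_add_quarter:
  fixes U z :: real
  assumes "0 \<le> U" and "0 < z"
  shows "sqrt U \<le> U / z + z / 4"
proof -
  have "0 \<le> (sqrt U - z / 2)\<^sup>2 / z" using \<open>0 < z\<close> by simp
  also have "\<dots> = U / z - sqrt U + z / 4"
    using assms by (simp add: power2_eq_square field_simps)
  finally show ?thesis by simp
qed

lemma Phi_fun_le_phi_fun:
  assumes "0 \<le> c" and "0 < z"
  shows "Phi_fun M F c x y \<le> phi_fun M F c x y z"
  using mult_left_mono[OF sqrt_le_div_add_quarter[OF upsq_nonneg \<open>0 < z\<close>] \<open>0 \<le> c\<close>]
  unfolding phi_fun_def Phi_fun_def by (simp add: field_simps)

text \<open>No positivity hypothesis is needed: for \<open>U = 0\<close> both sides reduce to \<open>y\<close>, since \<open>c / 0 = 0\<close>.\<close>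
lemma phi_fun_twice_sqrt_upsq:
  "phi_fun M F c x y (2 * sqrt (upsq M F x y)) = Phi_fun M F c x y"
proof -
  have "c / (2 * sqrt (upsq M F x y)) * upsq M F x y = c * sqrt (upsq M F x y) / 2"
    using real_div_sqrt[OF upsq_nonneg[of M F x y]]
    by (metis divide_divide_eq_left' times_divide_eq_left times_divide_eq_right)
  then show ?thesis unfolding phi_fun_def Phi_fun_def by linarith
qed

lemma Inf_phi_fun:
  assumes "0 < c"
  shows "Inf ((\<lambda>z. phi_fun M F c x y z) ` {0<..}) = Phi_fun M F c x y"
proof (rule cInf_eq_non_empty)
  show "(\<lambda>z. phi_fun M F c x y z) ` {0<..} \<noteq> {}" by auto
  show "Phi_fun M F c x y \<le> v" if "v \<in> (\<lambda>z. phi_fun M F c x y z) ` {0<..}" for v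
    using that \<open>0 < c\<close> by (auto intro: Phi_fun_le_phi_fun)
  fix b assume lower: "\<And>v. v \<in> (\<lambda>z. phi_fun M F c x y z) ` {0<..} \<Longrightarrow> b \<le> v"
  show "b \<le> Phi_fun M F c x y"
  proof (cases "upsq M F x y = 0")
    case True
    show ?thesis
    proof (rule field_le_epsilon)
      fix e :: real assume "0 < e"
      \<comment> \<open>with \<open>U = 0\<close> no \<open>z > 0\<close> is optimal, but \<open>z = 4e/c\<close> comes within \<open>e\<close>\<close>
      have "b \<le> phi_fun M F c x y (4 * e / c)"
        using \<open>0 < c\<close> \<open>0 < e\<close> by (intro lower) auto
      then show "b \<le> Phi_fun M F c x y + e"
        using True \<open>0 < c\<close> by (simp add: phi_fun_def Phi_fun_def)
    qed
  next
    case False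
    then have "0 < 2 * sqrt (upsq M F x y)" using upsq_nonneg[of M F x y] by simp
    then have "b \<le> phi_fun M F c x y (2 * sqrt (upsq M F x y))" by (intro lower) auto
    then show ?thesis by (simp add: phi_fun_twice_sqrt_upsq)
  qed
qed

lemma Phi_fun_mono:
  assumes "prob_space M" and "F x \<in> borel_measurable M"
    and "integrable M (\<lambda>\<xi>. (F x \<xi>)\<^sup>2)" and "0 \<le> c" and "c \<le> 1" and "f \<le> y"
  shows "Phi_fun M F c x f \<le> Phi_fun M F c x y"
proof -
  have "c * sqrt (upsq M F x f) \<le> c * sqrt (upsq M F x y) + c * (y - f)"
    using mult_left_mono[OF sqrt_upsq_le[of M F x f y, OF assms(1-3) \<open>f \<le> y\<close>] \<open>0 \<le> c\<close>]
    by (simp add: distrib_left)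
  moreover have "c * (y - f) \<le> y - f"
    using \<open>0 \<le> c\<close> \<open>c \<le> 1\<close> \<open>f \<le> y\<close> by (simp add: mult_left_le_one_le)
  ultimately show ?thesis unfolding Phi_fun_def by linarith
qed

lemma Inf_Phi_fun_atLeast:
  assumes "prob_space M" and "F x \<in> borel_measurable M"
    and "integrable M (\<lambda>\<xi>. (F x \<xi>)\<^sup>2)" and "0 \<le> c" and "c \<le> 1"
  shows "Inf ((\<lambda>y. Phi_fun M F c x y) ` {a..}) = Phi_fun M F c x a"
  using Phi_fun_mono[where M=M and F=F and x=x and c=c, OF assms] by (intro cInf_eq_minimum) auto

lemma Inf_phi_fun_atLeast_times:
  assumes "prob_space M" and "F x \<in> borel_measurable M"
    and "integrable M (\<lambda>\<xi>. (F x \<xi>)\<^sup>2)" and "0 < c" and "c \<le> 1"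
  shows "Inf ((\<lambda>(y, z). phi_fun M F c x y z) ` ({a..} \<times> {0<..})) = Phi_fun M F c x a"
proof (rule cInf_eq_non_empty)
  show "(\<lambda>(y, z). phi_fun M F c x y z) ` ({a..} \<times> {0<..}) \<noteq> {}" by auto
  show "Phi_fun M F c x a \<le> v"
    if v: "v \<in> (\<lambda>(y, z). phi_fun M F c x y z) ` ({a..} \<times> {0<..})" for v
  proof -
    have "0 \<le> c" using \<open>0 < c\<close> by simp
    obtain y z where "a \<le> y" "0 < z" "v = phi_fun M F c x y z" using v by auto
    then have "Phi_fun M F c x a \<le> Phi_fun M F c x y" and "Phi_fun M F c x y \<le> v"
      using Phi_fun_mono[where M=M and F=F and x=x, OF assms(1-3) \<open>0 \<le> c\<close> \<open>c \<le> 1\<close>]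
        Phi_fun_le_phi_fun[OF \<open>0 \<le> c\<close>] by auto
    then show ?thesis by linarith
  qed
  fix b assume "\<And>v. v \<in> (\<lambda>(y, z). phi_fun M F c x y z) ` ({a..} \<times> {0<..}) \<Longrightarrow> b \<le> v"
  then have "b \<le> Inf ((\<lambda>z. phi_fun M F c x a z) ` {0<..})"
    by (intro cInf_greatest) auto
  also have "\<dots> = Phi_fun M F c x a" using \<open>0 < c\<close> by (rule Inf_phi_fun)
  finally show "b \<le> Phi_fun M F c x a" .
qed

theorem lemma2:
  fixes M :: "'a measure" and F :: "real^'n \<Rightarrow> 'a \<Rightarrow> real"
    and X :: "(real^'n) set" and c :: real
  assumes "prob_space M"
    and meas: "\<And>x. x \<in> X \<Longrightarrow> F x \<in> borel_measurable M"
    and sq: "\<And>x. x \<in> X \<Longrightarrow> integrable M (\<lambda>\<xi>. (F x \<xi>)\<^sup>2)"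
    and "0 < c" and "c \<le> 1"
  shows
    "(\<forall>x\<in>X. \<forall>y::real.
        Inf ((\<lambda>z. phi_fun M F c x y z) ` {0<..}) = Phi_fun M F c x y
      \<and> (2 * sqrt (upsq M F x y) > 0 \<longrightarrow>
           phi_fun M F c x y (2 * sqrt (upsq M F x y)) = Phi_fun M F c x y))
   \<and> (\<forall>x\<in>X.
        Inf ((\<lambda>(y, z). phi_fun M F c x y z) ` ({mean_f M F x..} \<times> {0<..}))
          = Inf ((\<lambda>y. Phi_fun M F c x y) ` {mean_f M F x..})
      \<and> Inf ((\<lambda>y. Phi_fun M F c x y) ` {mean_f M F x..}) = h_fun M F c x
      \<and> Phi_fun M F c x (mean_f M F x) = h_fun M F c x
      \<and> (2 * sqrt (upsq M F x (mean_f M F x)) > 0 \<longrightarrow>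
           phi_fun M F c x (mean_f M F x) (2 * sqrt (upsq M F x (mean_f M F x)))
             = h_fun M F c x))"
proof -
  have h_eq: "h_fun M F c x = Phi_fun M F c x (mean_f M F x)" for x
    by (simp add: h_fun_def Phi_fun_def)
  have "0 \<le> c" using \<open>0 < c\<close> by simp
  have Inf_joint: "Inf ((\<lambda>(y, z). phi_fun M F c x y z) ` ({a..} \<times> {0<..})) = Phi_fun M F c x a"
    if "x \<in> X" for x a
    using Inf_phi_fun_atLeast_times[where F=F and x=x, OF \<open>prob_space M\<close> meas[OF that] sq[OF that]
        \<open>0 < c\<close> \<open>c \<le> 1\<close>] .
  have Inf_Phi: "Inf ((\<lambda>y. Phi_fun M F c x y) ` {a..}) = Phi_fun M F c x a" if "x \<in> X" for x a
    using Inf_Phi_fun_atLeast[where F=F and x=x, OF \<open>prob_space M\<close> meas[OF that] sq[OF that]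
        \<open>0 \<le> c\<close> \<open>c \<le> 1\<close>] .
  show ?thesis
    by (simp add: h_eq Inf_phi_fun[OF \<open>0 < c\<close>] phi_fun_twice_sqrt_upsq Inf_joint Inf_Phi)
qed

end
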